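(* Let $\eta\in(0,1)$. There exists a positive sequence $(\epsilon_j)_{j\ge1}$ converging to $0$ such that, with probability 1, for every $j$ large enough and every $W\in\Sigma_{\lfloor j(\eta-\epsilon_j)\rfloor}$, one has $\mathcal S_j(\eta,W)\neq\emptyset$.
   Context: Fix $d\ge1$. $\Sigma_j$ is the set of words of length $j$ over the alphabet $\{0,1\}^d$ and $\Sigma^*=\bigcup_{j\ge1}\Sigma_j$; for $w=w_1\cdots w_j\in\Sigma_j$ with $w_k=(w_k^{(1)},\dots,w_k^{(d)})$, $I_w=\prod_{i=1}^d[x_w^{(i)},x_w^{(i)}+2^{-j}]$ where $x_w^{(i)}=\sum_{k=1}^jw_k^{(i)}2^{-k}$. Let $(p_w)_{w\in\Sigma^*}$ be independent Bernoulli random variables with $\mathbb P(p_w=1)=2^{-d(1-\eta)|w|}$. Set $\mathcal S_j(\eta)=\{w\in\Sigma_j:p_w=1\}$ and, for $W\in\Sigma^*$, $\mathcal S_j(\eta,W)=\{w\in\mathcal S_j(\eta): I_w\subset I_W\}$. *)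

theory Defs
  imports "HOL-Probability.Probability"
begin

text \<open>Letters of the alphabet {0,1}^d are boolean lists of length d; words are lists of letters.\<close>
type_synonym word = "bool list list"

definition Sigma_len :: "nat \<Rightarrow> nat \<Rightarrow> word set" where
  "Sigma_len d j = {w. length w = j \<and> (\<forall>a\<in>set w. length a = d)}"

definition Sigma_star :: "nat \<Rightarrow> word set" where
  "Sigma_star d = (\<Union>j\<in>{1..}. Sigma_len d j)"

text \<open>x_w^(i) = sum_{k=1}^{|w|} w_k^(i) 2^(-k)  (list index k-1).\<close>
definition corner :: "word \<Rightarrow> nat \<Rightarrow> real" where
  "corner w i = (\<Sum>k<length w. (if w ! k ! i then 1 else 0) * (1/2) ^ (k + 1))"

text \<open>The dyadic cube I_w in R^d, points represented as functions nat => real vanishing at i >= d.\<close>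
definition cube :: "nat \<Rightarrow> word \<Rightarrow> (nat \<Rightarrow> real) set" where
  "cube d w = {x. \<forall>i. (i < d \<longrightarrow> corner w i \<le> x i \<and> x i \<le> corner w i + (1/2) ^ length w)
                      \<and> (d \<le> i \<longrightarrow> x i = 0)}"

definition keep_prob :: "nat \<Rightarrow> real \<Rightarrow> word \<Rightarrow> real" where
  "keep_prob d \<eta> w = 2 powr (- (real d * (1 - \<eta>) * real (length w)))"

definition coin_space :: "nat \<Rightarrow> real \<Rightarrow> (word \<Rightarrow> bool) measure" where
  "coin_space d \<eta> = PiM (Sigma_star d) (\<lambda>w. measure_pmf (bernoulli_pmf (keep_prob d \<eta> w)))"

definition S_set :: "nat \<Rightarrow> nat \<Rightarrow> (word \<Rightarrow> bool) \<Rightarrow> word set" where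
  "S_set d j \<omega> = {w \<in> Sigma_len d j. \<omega> w}"

definition S_in :: "nat \<Rightarrow> nat \<Rightarrow> word \<Rightarrow> (word \<Rightarrow> bool) \<Rightarrow> word set" where
  "S_in d j W \<omega> = {w \<in> S_set d j \<omega>. cube d w \<subseteq> cube d W}"

end

theory Submission imports Defs "HOL-Real_Asymp.Real_Asymp" begin

text \<open>
  Put \<open>m = \<lfloor>j(\<eta> - \<epsilon>\<^sub>j)\<rfloor>\<close>. A cube \<open>I\<^sub>W\<close> of generation \<open>m\<close> contains no kept cube of
  generation \<open>j\<close> only if all its \<open>2\<^bsup>d(j-m)\<^esup>\<close> descendants \<open>W v\<close> of length \<open>j\<close> are discarded, which
  happens with probability \<open>(1 - 2\<^bsup>-d(1-\<eta>)j\<^esup>)\<^bsup>2\<^bsup>d(j-m)\<^esup>\<^esup> \<le> exp (-2\<^bsup>d(\<eta>j - m)\<^esup>)\<close>.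
  With \<open>\<epsilon>\<^sub>j = 2 log\<^sub>2 (j+1) / j\<close> the exponent is at least \<open>(j+1)\<^sup>2\<close>, so a union bound over
  the \<open>2\<^bsup>dm\<^esup>\<close> cubes of generation \<open>m\<close> bounds the failure probability at level \<open>j\<close> by \<open>e\<^sup>-\<^sup>j\<close>
  for large \<open>j\<close>, and the Borel--Cantelli lemma concludes.
\<close>

lemma Sigma_len_eq_lists: "Sigma_len d k = {xs. set xs \<subseteq> {a. length a = d} \<and> length xs = k}"
  unfolding Sigma_len_def by auto

lemma finite_Sigma_len: "finite (Sigma_len d k)"
  unfolding Sigma_len_eq_lists
  using finite_lists_length_eq[OF finite_lists_length_eq[of "UNIV :: bool set" d]] by simp

lemma card_Sigma_len: "card (Sigma_len d k) = 2 ^ (d * k)"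
proof -
  have "card {a :: bool list. length a = d} = 2 ^ d"
    using card_lists_length_eq[of "UNIV :: bool set" d] by simp
  then show ?thesis
    unfolding Sigma_len_eq_lists
    using card_lists_length_eq[OF finite_lists_length_eq[of "UNIV :: bool set" d]]
    by (simp add: power_mult)
qed

lemma append_in_Sigma_len:
  "W \<in> Sigma_len d a \<Longrightarrow> v \<in> Sigma_len d b \<Longrightarrow> W @ v \<in> Sigma_len d (a + b)"
  unfolding Sigma_len_def by auto

lemma sum_lessThan_add: "(\<Sum>k<m + n. f k) = (\<Sum>k<m. f k) + (\<Sum>k<n. f (m + k))"
  for f :: "nat \<Rightarrow> 'a::comm_monoid_add"
  by (induction n) (auto simp: add.assoc)

lemma corner_append: "corner (W @ v) i = corner W i + (1/2) ^ length W * corner v i"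
proof -
  let ?f = "\<lambda>k. (if (W @ v) ! k ! i then 1 else 0) * (1/2::real) ^ (k + 1)"
  have "corner (W @ v) i = (\<Sum>k<length W + length v. ?f k)"
    unfolding corner_def by simp
  also have "\<dots> = (\<Sum>k<length W. ?f k) + (\<Sum>k<length v. ?f (length W + k))"
    by (rule sum_lessThan_add)
  also have "(\<Sum>k<length W. ?f k) = corner W i"
    unfolding corner_def by (intro sum.cong) (auto simp: nth_append)
  also have "(\<Sum>k<length v. ?f (length W + k)) = (1/2) ^ length W * corner v i"
    unfolding corner_def sum_distrib_left by (intro sum.cong) (auto simp: nth_append power_add)
  finally show ?thesis .
qed

lemma corner_nonneg: "0 \<le> corner v i"
  unfolding corner_def by (intro sum_nonneg) auto

lemma corner_le: "corner v i \<le> 1 - (1/2) ^ length v"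
proof -
  have geometric: "(\<Sum>k<n. (1/2::real) ^ (k + 1)) = 1 - (1/2) ^ n" for n
    by (induction n) auto
  have "corner v i \<le> (\<Sum>k<length v. (1/2::real) ^ (k + 1))"
    unfolding corner_def by (intro sum_mono) auto
  then show ?thesis
    unfolding geometric .
qed

lemma cube_append_subset: "cube d (W @ v) \<subseteq> cube d W"
proof
  fix x assume x: "x \<in> cube d (W @ v)"
  have "corner W i \<le> x i \<and> x i \<le> corner W i + (1/2) ^ length W" if "i < d" for i
  proof -
    let ?s = "(1/2::real) ^ length W"
    have "0 \<le> ?s * corner v i" "?s * corner v i + ?s * (1/2) ^ length v \<le> ?s"
      using mult_left_mono[OF corner_le, of ?s v i] corner_nonneg[of v i]
      by (auto simp: algebra_simps)
    with x that show ?thesis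
      unfolding cube_def corner_append by (auto simp: power_add)
  qed
  with x show "x \<in> cube d W"
    unfolding cube_def by auto
qed

lemma append_in_S_in:
  "W \<in> Sigma_len d m \<Longrightarrow> v \<in> Sigma_len d n \<Longrightarrow> \<omega> (W @ v) \<Longrightarrow> W @ v \<in> S_in d (m + n) W \<omega>"
  unfolding S_in_def S_set_def using append_in_Sigma_len cube_append_subset by blast

lemma prob_space_coin_space: "prob_space (coin_space d \<eta>)"
  unfolding coin_space_def by (intro prob_space_PiM prob_space_measure_pmf)

lemma keep_prob_le_1: "\<eta> \<le> 1 \<Longrightarrow> keep_prob d \<eta> w \<le> 1"
  unfolding keep_prob_def powr_minus
  by (simp add: inverse_le_1_iff ge_one_powr_ge_zero)

lemma coin_space_all_off:
  assumes "\<eta> \<le> 1" "finite J" "J \<subseteq> Sigma_star d"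
  defines "E \<equiv> {\<omega> \<in> space (coin_space d \<eta>). \<forall>w\<in>J. \<not> \<omega> w}"
  shows "E \<in> sets (coin_space d \<eta>)"
    and "measure (coin_space d \<eta>) E = (\<Prod>w\<in>J. 1 - keep_prob d \<eta> w)"
proof -
  let ?B = "\<lambda>w. measure_pmf (bernoulli_pmf (keep_prob d \<eta> w))"
  have E_eq: "E = prod_emb (Sigma_star d) ?B J (Pi\<^sub>E J (\<lambda>_. {False}))"
    unfolding E_def coin_space_def
    by (intro set_eqI) (auto simp: prod_emb_iff space_PiM PiE_iff fun_eq_iff)
  show "E \<in> sets (coin_space d \<eta>)"
    unfolding E_eq coin_space_def using assms by (intro sets_PiM_I) auto
  have "emeasure (coin_space d \<eta>) E = (\<Prod>w\<in>J. emeasure (?B w) {False})"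
    unfolding E_eq coin_space_def using assms
    by (intro emeasure_PiM_emb) (auto simp: prob_space_measure_pmf)
  also have "\<dots> = ennreal (\<Prod>w\<in>J. 1 - keep_prob d \<eta> w)"
    using keep_prob_le_1[OF assms(1)]
    by (simp add: emeasure_pmf_single keep_prob_def prod_ennreal)
  finally show "measure (coin_space d \<eta>) E = (\<Prod>w\<in>J. 1 - keep_prob d \<eta> w)"
    using keep_prob_le_1[OF assms(1)] by (simp add: measure_def prod_nonneg)
qed

lemma coin_space_extensions_off:
  assumes "\<eta> \<le> 1" "W \<in> Sigma_len d m" "1 \<le> m + n"
  defines "E \<equiv> {\<omega> \<in> space (coin_space d \<eta>). \<forall>v\<in>Sigma_len d n. \<not> \<omega> (W @ v)}"
  shows "E \<in> sets (coin_space d \<eta>)"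
    and "measure (coin_space d \<eta>) E
           = (1 - 2 powr (- (real d * (1 - \<eta>) * real (m + n)))) ^ 2 ^ (d * n)"
proof -
  let ?J = "(\<lambda>v. W @ v) ` Sigma_len d n"
  have J_words: "?J \<subseteq> Sigma_len d (m + n)"
    using append_in_Sigma_len[OF assms(2)] by auto
  with assms(3) have "?J \<subseteq> Sigma_star d"
    unfolding Sigma_star_def by auto
  note all_off = coin_space_all_off[OF assms(1) finite_imageI[OF finite_Sigma_len] this]
  have E_eq: "E = {\<omega> \<in> space (coin_space d \<eta>). \<forall>w\<in>?J. \<not> \<omega> w}"
    unfolding E_def by auto
  show "E \<in> sets (coin_space d \<eta>)"
    unfolding E_eq by (rule all_off(1))
  have "measure (coin_space d \<eta>) E = (\<Prod>w\<in>?J. 1 - 2 powr (- (real d * (1 - \<eta>) * real (m + n))))"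
    unfolding E_eq all_off(2) using J_words
    by (intro prod.cong) (auto simp: keep_prob_def Sigma_len_def)
  also have "\<dots> = (1 - 2 powr (- (real d * (1 - \<eta>) * real (m + n)))) ^ card ?J"
    by simp
  also have "card ?J = 2 ^ (d * n)"
    by (simp add: card_image inj_on_def card_Sigma_len)
  finally show "measure (coin_space d \<eta>) E
      = (1 - 2 powr (- (real d * (1 - \<eta>) * real (m + n)))) ^ 2 ^ (d * n)" .
qed

lemma coin_space_some_extensions_off:
  fixes d :: nat
  assumes "\<eta> \<le> 1" "1 \<le> m + n"
  defines "A \<equiv> {\<omega> \<in> space (coin_space d \<eta>). \<exists>W\<in>Sigma_len d m. \<forall>v\<in>Sigma_len d n. \<not> \<omega> (W @ v)}"
  shows "A \<in> sets (coin_space d \<eta>)"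
    and "measure (coin_space d \<eta>) A
           \<le> 2 ^ (d * m) * (1 - 2 powr (- (real d * (1 - \<eta>) * real (m + n)))) ^ 2 ^ (d * n)"
proof -
  have A_eq: "A = (\<Union>W\<in>Sigma_len d m.
      {\<omega> \<in> space (coin_space d \<eta>). \<forall>v\<in>Sigma_len d n. \<not> \<omega> (W @ v)})"
    unfolding A_def by auto
  note off = coin_space_extensions_off[OF assms(1) _ assms(2)]
  show "A \<in> sets (coin_space d \<eta>)"
    unfolding A_eq using off(1) finite_Sigma_len by auto
  have "measure (coin_space d \<eta>) A \<le> (\<Sum>W\<in>Sigma_len d m.
      measure (coin_space d \<eta>) {\<omega> \<in> space (coin_space d \<eta>). \<forall>v\<in>Sigma_len d n. \<not> \<omega> (W @ v)})"
    unfolding A_eq using off(1) finite_Sigma_len by (intro measure_UNION_le) auto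
  also have "\<dots> = 2 ^ (d * m) * (1 - 2 powr (- (real d * (1 - \<eta>) * real (m + n)))) ^ 2 ^ (d * n)"
    using off(2) by (simp add: card_Sigma_len)
  finally show "measure (coin_space d \<eta>) A
      \<le> 2 ^ (d * m) * (1 - 2 powr (- (real d * (1 - \<eta>) * real (m + n)))) ^ 2 ^ (d * n)" .
qed

lemma one_minus_power_le_exp: "0 \<le> p \<Longrightarrow> p \<le> 1 \<Longrightarrow> (1 - p) ^ n \<le> exp (- p * real n)"
  for p :: real
  using power_mono[OF exp_ge_add_one_self[of "- p"], of n]
  by (simp add: exp_of_nat_mult[symmetric] mult.commute)

lemma expected_kept_extensions_ge_square:
  fixes \<eta> :: real
  assumes "1 \<le> d" "m \<le> j"
    and slack: "real m + 2 * log 2 (real j + 1) \<le> \<eta> * real j"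
  shows "(real j + 1) ^ 2 \<le> 2 powr (- (real d * (1 - \<eta>) * real j)) * 2 ^ (d * (j - m))"
proof -
  have gap: "2 * log 2 (real j + 1) \<le> \<eta> * real j - real m"
    using slack by simp
  have "2 * log 2 (real j + 1) = log 2 ((real j + 1) ^ 2)"
    by (simp add: log_nat_power)
  then have "(real j + 1) ^ 2 = 2 powr (2 * log 2 (real j + 1))"
    by simp
  also have "\<dots> \<le> 2 powr (real d * (\<eta> * real j - real m))"
  proof (intro powr_mono)
    have "0 \<le> 2 * log 2 (real j + 1)"
      by simp
    with gap have "0 \<le> \<eta> * real j - real m"
      by linarith
    with gap assms(1) show "2 * log 2 (real j + 1) \<le> real d * (\<eta> * real j - real m)"
      using mult_right_mono[of 1 "real d" "\<eta> * real j - real m"] by simp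
  qed simp
  also have "\<dots> = 2 powr (- (real d * (1 - \<eta>) * real j)) * 2 ^ (d * (j - m))"
    using assms(2) by (simp add: powr_add[symmetric] powr_realpow[symmetric] algebra_simps)
  finally show ?thesis .
qed

lemma extension_failure_bound:
  fixes \<eta> :: real
  assumes "\<eta> \<le> 1" "1 \<le> d" "d \<le> j"
    and slack: "real m + 2 * log 2 (real j + 1) \<le> \<eta> * real j"
  shows "m \<le> j"
    and "2 ^ (d * m) * (1 - 2 powr (- (real d * (1 - \<eta>) * real j))) ^ 2 ^ (d * (j - m))
           \<le> exp (- 1) ^ j"
proof -
  define p where "p = 2 powr (- (real d * (1 - \<eta>) * real j))"
  have "0 \<le> log 2 (real j + 1)"
    by simp
  moreover have "\<eta> * real j \<le> 1 * real j"
    using assms(1) by (intro mult_right_mono) auto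
  ultimately show m_le: "m \<le> j"
    using slack by linarith
  have p_le_1: "p \<le> 1"
    unfolding p_def using keep_prob_le_1[OF assms(1), of d "replicate j []"]
    by (simp add: keep_prob_def)
  have "(1 - p) ^ 2 ^ (d * (j - m)) \<le> exp (- p * 2 ^ (d * (j - m)))"
    using one_minus_power_le_exp[OF _ p_le_1, of "2 ^ (d * (j - m))"] by (simp add: p_def)
  also have "\<dots> \<le> exp (- ((real j + 1) ^ 2))"
    using expected_kept_extensions_ge_square[OF assms(2) m_le slack] by (simp add: p_def)
  finally have miss: "(1 - p) ^ 2 ^ (d * (j - m)) \<le> exp (- ((real j + 1) ^ 2))" .
  have "(2::real) ^ (d * m) \<le> exp 1 ^ (d * j)"
    using m_le exp_ge_add_one_self[of 1]
    by (intro order.trans[OF power_increasing power_mono]) auto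
  also have "\<dots> = exp (real d * real j)"
    by (simp add: exp_of_nat_mult[symmetric])
  finally have count: "(2::real) ^ (d * m) \<le> exp (real d * real j)" .
  have "2 ^ (d * m) * (1 - p) ^ 2 ^ (d * (j - m)) \<le> exp (real d * real j) * exp (- ((real j + 1) ^ 2))"
    using count miss p_le_1 by (intro mult_mono) auto
  also have "\<dots> \<le> exp (- real j)"
    using mult_right_mono[of "real d" "real j" "real j"] assms(3)
    by (simp add: exp_add[symmetric] power2_eq_square algebra_simps)
  also have "\<dots> = exp (- 1) ^ j"
    by (simp add: exp_of_nat_mult[symmetric])
  finally show "2 ^ (d * m) * (1 - 2 powr (- (real d * (1 - \<eta>) * real j))) ^ 2 ^ (d * (j - m))
      \<le> exp (- 1) ^ j"
    unfolding p_def .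
qed

lemma eventually_extension_failure_le:
  fixes \<epsilon> :: "nat \<Rightarrow> real"
  assumes "\<eta> \<le> 1" "1 \<le> d" "0 < \<eta>" "\<epsilon> \<longlonglongrightarrow> 0"
    and slack: "\<forall>\<^sub>F j in sequentially. 2 * log 2 (real j + 1) \<le> real j * \<epsilon> j"
  defines "m \<equiv> \<lambda>j. nat \<lfloor>real j * (\<eta> - \<epsilon> j)\<rfloor>"
  shows "\<forall>\<^sub>F j in sequentially. m j \<le> j \<and>
    2 ^ (d * m j) * (1 - 2 powr (- (real d * (1 - \<eta>) * real j))) ^ 2 ^ (d * (j - m j)) \<le> exp (- 1) ^ j"
  using order_tendstoD(2)[OF assms(4,3)] slack eventually_ge_at_top[of d]
proof eventually_elim
  case (elim j)
  then have "real (m j) \<le> real j * (\<eta> - \<epsilon> j)"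
    unfolding m_def by simp
  with elim have "real (m j) + 2 * log 2 (real j + 1) \<le> \<eta> * real j"
    by (simp add: algebra_simps)
  with elim assms(1,2) show ?case
    using extension_failure_bound[of \<eta> d j "m j"] by simp
qed

lemma AE_eventually_S_in_nonempty:
  assumes "\<eta> \<le> 1" "summable b"
    and bound: "\<forall>\<^sub>F j in sequentially. m j \<le> j \<and>
           2 ^ (d * m j) * (1 - 2 powr (- (real d * (1 - \<eta>) * real j))) ^ 2 ^ (d * (j - m j)) \<le> b j"
  shows "AE \<omega> in coin_space d \<eta>. \<forall>\<^sub>F j in sequentially. \<forall>W\<in>Sigma_len d (m j). S_in d j W \<omega> \<noteq> {}"
proof -
  interpret prob_space "coin_space d \<eta>"
    by (rule prob_space_coin_space)
  \<comment> \<open>guarded so that the descendants have length \<open>j \<ge> 1\<close>, i.e.\ carry coins\<close>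
  define A where "A j = (if 1 \<le> j \<and> m j \<le> j
      then {\<omega> \<in> space (coin_space d \<eta>). \<exists>W\<in>Sigma_len d (m j). \<forall>v\<in>Sigma_len d (j - m j). \<not> \<omega> (W @ v)}
      else {})" for j
  note failure = coin_space_some_extensions_off[OF assms(1), where m = "m j" and n = "j - m j" for j]
  have A_events: "A j \<in> events" for j
    using failure(1) by (simp add: A_def)
  from bound eventually_ge_at_top[of 1] have "\<forall>\<^sub>F j in sequentially. norm (prob (A j)) \<le> b j"
  proof eventually_elim
    case (elim j)
    then have "prob (A j)
        \<le> 2 ^ (d * m j) * (1 - 2 powr (- (real d * (1 - \<eta>) * real j))) ^ 2 ^ (d * (j - m j))"
      using failure(2)[of j] by (simp add: A_def)
    with elim show ?case
      by simp
  qed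
  then have "summable (\<lambda>j. prob (A j))"
    using assms(2) by (rule summable_comparison_test_ev)
  then have "AE \<omega> in coin_space d \<eta>. \<forall>\<^sub>F j in sequentially. \<omega> \<in> space (coin_space d \<eta>) - A j"
    by (intro borel_cantelli_AE1 A_events) (simp_all add: less_top[symmetric])
  then show ?thesis
  proof (rule eventually_mono)
    fix \<omega> assume "\<forall>\<^sub>F j in sequentially. \<omega> \<in> space (coin_space d \<eta>) - A j"
    with bound eventually_ge_at_top[of 1]
    show "\<forall>\<^sub>F j in sequentially. \<forall>W\<in>Sigma_len d (m j). S_in d j W \<omega> \<noteq> {}"
    proof eventually_elim
      case (elim j)
      then have "\<exists>v\<in>Sigma_len d (j - m j). \<omega> (W @ v)" if "W \<in> Sigma_len d (m j)" for W
        using that by (auto simp: A_def)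
      with elim show ?case
        using append_in_S_in[of _ d "m j" _ "j - m j" \<omega>] by fastforce
    qed
  qed
qed

theorem lemma2:
  fixes d :: nat and \<eta> :: real
  assumes "1 \<le> d" and "0 < \<eta>" and "\<eta> < 1"
  shows "\<exists>\<epsilon> :: nat \<Rightarrow> real. (\<forall>j. 0 < \<epsilon> j) \<and> \<epsilon> \<longlonglongrightarrow> 0 \<and>
    (AE \<omega> in coin_space d \<eta>. eventually (\<lambda>j.
       \<forall>W \<in> Sigma_len d (nat \<lfloor>real j * (\<eta> - \<epsilon> j)\<rfloor>). S_in d j W \<omega> \<noteq> {}) sequentially)"
proof -
  define \<epsilon> :: "nat \<Rightarrow> real" where "\<epsilon> j = (if j = 0 then 1 else 2 * log 2 (real j + 1) / real j)" for j
  have \<epsilon>_pos: "0 < \<epsilon> j" for j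
    unfolding \<epsilon>_def by simp
  have "(\<lambda>j. 2 * log 2 (real j + 1) / real j) \<longlonglongrightarrow> 0"
    by real_asymp
  then have \<epsilon>_lim: "\<epsilon> \<longlonglongrightarrow> 0"
    unfolding \<epsilon>_def by (rule Lim_transform_eventually) (auto intro: eventually_ge_at_top[of 1, THEN eventually_mono])
  have "\<forall>\<^sub>F j in sequentially. 2 * log 2 (real j + 1) \<le> real j * \<epsilon> j"
    using eventually_ge_at_top[of 1] by eventually_elim (simp add: \<epsilon>_def)
  with assms \<epsilon>_lim have "AE \<omega> in coin_space d \<eta>. \<forall>\<^sub>F j in sequentially.
      \<forall>W\<in>Sigma_len d (nat \<lfloor>real j * (\<eta> - \<epsilon> j)\<rfloor>). S_in d j W \<omega> \<noteq> {}"
    by (intro AE_eventually_S_in_nonempty[where b = "\<lambda>j. exp (- 1) ^ j"] eventually_extension_failure_le)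
      (auto intro: summable_geometric)
  with \<epsilon>_pos \<epsilon>_lim show ?thesis
    by blast
qed

end
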